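(* Let $C$ be a logistic circuit over Boolean variables $X_1,\dots,X_k$ with root OR gate $r$, and let $\mathcal{W}$ be the set of all wires $(n,\theta,c)$ from a child $c$ into an OR gate $n$, with parameter $\theta$. Then for every input $\mathbf{x}\in[0,1]^k$, $$g_r(\mathbf{x})=\sum_{(n,\theta,c)\in\mathcal{W}} f_r(n,\mathbf{x},c)\cdot\theta,$$ i.e. the bottom-up semantics (via $g_r$) and the top-down semantics (via global circuit flows) of logistic circuits are equivalent.
   Context: A logical circuit over Boolean variables $X_1,\dots,X_k$ is a rooted directed acyclic graph whose leaves are literals $X_i$ or $\neg X_i$ and whose inner nodes are AND gates or OR gates; each node represents a logical sentence. An AND gate is decomposable if its inputs mention pairwise disjoint sets of variables; an OR gate is deterministic if for every complete assignment at most one of its inputs is satisfied. A logistic circuit is a logical circuit whose root is an OR gate, with all AND gates decomposable and all OR gates deterministic, together with a real parameter on each input wire of each OR gate. For $\mathbf{x}\in[0,1]^k$, $\Pr_{\mathbf{x}}$ is the fully factorized distribution with $\Pr_{\mathbf{x}}(X_i=1)=x_i$, and $\Pr_{\mathbf{x}}(n)$ is the probability of the sentence of node $n$. For an OR gate $n$ with child $c$, the (local) flow is $f(n,\mathbf{x},c)=\Pr_{\mathbf{x}}(c)/\Pr_{\mathbf{x}}(n)$ (taken to be $0$ if $\Pr_{\mathbf{x}}(n)=0$). Bottom-up weight function: $g_n(\mathbf{x})=0$ for a leaf; $g_n(\mathbf{x})=\sum_i g_{c_i}(\mathbf{x})$ for an AND gate with children $c_i$; $g_n(\mathbf{x})=\sum_i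 f(n,\mathbf{x},c_i)(g_{c_i}(\mathbf{x})+\theta_i)$ for an OR gate with inputs $(c_i,\theta_i)$. Global circuit flow $f_r(n,\mathbf{x},c)$ between a node $n$ and its child $c$, defined top-down: for the root, $f_r(r,\mathbf{x},c)=f(r,\mathbf{x},c)$; for a non-root node $n$ with parents $v_1,\dots,v_m$: if $n$ is an AND gate, $f_r(n,\mathbf{x},c)=\sum_{i=1}^m f_r(v_i,\mathbf{x},n)$; if $n$ is an OR gate, $f_r(n,\mathbf{x},c)=f(n,\mathbf{x},c)\cdot\sum_{i=1}^m f_r(v_i,\mathbf{x},n)$. *)

theory Defs
  imports "HOL-Analysis.Analysis"
begin

text \<open>Each node carries a gate label:
  a literal (variable index i, polarity b; b = True means X_i, b = False means not X_i),
  an AND gate with its list of children, or an OR gate with its list of input wires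
  (child, parameter theta).\<close>

datatype 'n gate = Lit nat bool | AndG "'n list" | OrG "('n \<times> real) list"

fun children :: "'n gate \<Rightarrow> 'n set" where
  "children (Lit i b) = {}"
| "children (AndG cs) = set cs"
| "children (OrG ws) = fst ` set ws"

definition edges :: "'n set \<Rightarrow> ('n \<Rightarrow> 'n gate) \<Rightarrow> ('n \<times> 'n) set" where
  "edges N G = {(n, c). n \<in> N \<and> c \<in> children (G n)}"

inductive sat :: "('n \<Rightarrow> 'n gate) \<Rightarrow> (nat \<Rightarrow> bool) \<Rightarrow> 'n \<Rightarrow> bool"
  for G :: "'n \<Rightarrow> 'n gate" and a :: "nat \<Rightarrow> bool" where
  sat_lit: "G n = Lit i b \<Longrightarrow> a i = b \<Longrightarrow> sat G a n"
| sat_and: "G n = AndG cs \<Longrightarrow> \<forall>c\<in>set cs. sat G a c \<Longrightarrow> sat G a n"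
| sat_or: "G n = OrG ws \<Longrightarrow> (c, \<theta>) \<in> set ws \<Longrightarrow> sat G a c \<Longrightarrow> sat G a n"

definition vars :: "'n set \<Rightarrow> ('n \<Rightarrow> 'n gate) \<Rightarrow> 'n \<Rightarrow> nat set" where
  "vars N G n = {i. \<exists>m b. (n, m) \<in> (edges N G)\<^sup>* \<and> G m = Lit i b}"

definition decomposable :: "'n set \<Rightarrow> ('n \<Rightarrow> 'n gate) \<Rightarrow> 'n list \<Rightarrow> bool" where
  "decomposable N G cs \<longleftrightarrow>
     (\<forall>i<length cs. \<forall>j<length cs. i \<noteq> j \<longrightarrow> vars N G (cs ! i) \<inter> vars N G (cs ! j) = {})"

definition deterministic :: "('n \<Rightarrow> 'n gate) \<Rightarrow> ('n \<times> real) list \<Rightarrow> bool" where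
  "deterministic G ws \<longleftrightarrow>
     (\<forall>a. \<forall>i<length ws. \<forall>j<length ws.
        sat G a (fst (ws ! i)) \<and> sat G a (fst (ws ! j)) \<longrightarrow> i = j)"

definition logistic_circuit :: "nat \<Rightarrow> 'n set \<Rightarrow> ('n \<Rightarrow> 'n gate) \<Rightarrow> 'n \<Rightarrow> bool" where
  "logistic_circuit k N G r \<longleftrightarrow>
     finite N \<and> r \<in> N \<and>
     (\<forall>n\<in>N. children (G n) \<subseteq> N) \<and>
     acyclic (edges N G) \<and>
     (\<forall>n\<in>N. (r, n) \<in> (edges N G)\<^sup>*) \<and>
     (\<exists>ws. G r = OrG ws) \<and>
     (\<forall>n\<in>N. \<forall>i b. G n = Lit i b \<longrightarrow> i \<in> {1..k}) \<and>
     (\<forall>n\<in>N. \<forall>cs. G n = AndG cs \<longrightarrow> cs \<noteq> [] \<and> distinct cs \<and> decomposable N G cs) \<and>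
     (\<forall>n\<in>N. \<forall>ws. G n = OrG ws \<longrightarrow> ws \<noteq> [] \<and> distinct (map fst ws) \<and> deterministic G ws)"

definition Pr :: "nat \<Rightarrow> ('n \<Rightarrow> 'n gate) \<Rightarrow> (nat \<Rightarrow> real) \<Rightarrow> 'n \<Rightarrow> real" where
  "Pr k G x n =
     (\<Sum>a\<in>PiE {1..k} (\<lambda>_. UNIV :: bool set).
        (\<Prod>i\<in>{1..k}. if a i then x i else 1 - x i) * (if sat G a n then 1 else 0))"

definition flow :: "nat \<Rightarrow> ('n \<Rightarrow> 'n gate) \<Rightarrow> 'n \<Rightarrow> (nat \<Rightarrow> real) \<Rightarrow> 'n \<Rightarrow> real" where
  "flow k G n x c = (if Pr k G x n = 0 then 0 else Pr k G x c / Pr k G x n)"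

text \<open>The recursion is unrolled with a depth bound d; on an acyclic circuit with node set N
  every path has fewer than card N edges, so d = card N gives exactly the recursive
  definition of g_n.\<close>
fun g_aux :: "nat \<Rightarrow> ('n \<Rightarrow> 'n gate) \<Rightarrow> (nat \<Rightarrow> real) \<Rightarrow> nat \<Rightarrow> 'n \<Rightarrow> real" where
  "g_aux k G x 0 n = 0"
| "g_aux k G x (Suc d) n =
     (case G n of
        Lit i b \<Rightarrow> 0
      | AndG cs \<Rightarrow> (\<Sum>c\<leftarrow>cs. g_aux k G x d c)
      | OrG ws \<Rightarrow> (\<Sum>(c, \<theta>)\<leftarrow>ws. flow k G n x c * (g_aux k G x d c + \<theta>)))"

definition g :: "nat \<Rightarrow> 'n set \<Rightarrow> ('n \<Rightarrow> 'n gate) \<Rightarrow> (nat \<Rightarrow> real) \<Rightarrow> 'n \<Rightarrow> real" where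
  "g k N G x n = g_aux k G x (card N) n"

definition parents :: "'n set \<Rightarrow> ('n \<Rightarrow> 'n gate) \<Rightarrow> 'n \<Rightarrow> 'n set" where
  "parents N G n = {v \<in> N. n \<in> children (G v)}"

text \<open>Global circuit flow f_r(n,x,c), defined top-down from the root r; again unrolled with
  a depth bound, d = card N being enough on an acyclic rooted circuit.\<close>
fun gflow_aux :: "nat \<Rightarrow> 'n set \<Rightarrow> ('n \<Rightarrow> 'n gate) \<Rightarrow> 'n \<Rightarrow> nat \<Rightarrow> 'n \<Rightarrow> (nat \<Rightarrow> real) \<Rightarrow> 'n \<Rightarrow> real" where
  "gflow_aux k N G r 0 n x c = 0"
| "gflow_aux k N G r (Suc d) n x c =
     (if n = r then flow k G r x c
      else (case G n of
              Lit i b \<Rightarrow> 0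
            | AndG cs \<Rightarrow> (\<Sum>v\<in>parents N G n. gflow_aux k N G r d v x n)
            | OrG ws \<Rightarrow> flow k G n x c * (\<Sum>v\<in>parents N G n. gflow_aux k N G r d v x n)))"

definition gflow :: "nat \<Rightarrow> 'n set \<Rightarrow> ('n \<Rightarrow> 'n gate) \<Rightarrow> 'n \<Rightarrow> 'n \<Rightarrow> (nat \<Rightarrow> real) \<Rightarrow> 'n \<Rightarrow> real" where
  "gflow k N G r n x c = gflow_aux k N G r (card N) n x c"

definition wires :: "'n set \<Rightarrow> ('n \<Rightarrow> 'n gate) \<Rightarrow> ('n \<times> real \<times> 'n) set" where
  "wires N G = {(n, \<theta>, c). n \<in> N \<and> (\<exists>ws. G n = OrG ws \<and> (c, \<theta>) \<in> set ws)}"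

end

theory Submission
  imports Defs
begin

text \<open>Write the bottom-up recursion as \<open>g n = (\<Sum>c. w n c * g c) + t n\<close>, where the edge weight
  \<open>w n c\<close> is the local flow on an OR wire and 1 on an AND wire, and \<open>t n\<close> collects the
  flow-weighted parameters of the wires into \<open>n\<close>. The global flow factorises as
  \<open>f_r(n, c) = w n c * F n\<close>, where \<open>F n\<close> is the total flow into \<open>n\<close> (1 at the root), and \<open>F\<close>
  satisfies the transposed recursion \<open>F m = [m = r] + (\<Sum>v. w v m * F v)\<close>. Expanding
  \<open>\<Sum>m. F m * g m\<close> once with each recursion gives \<open>g r = (\<Sum>n. F n * t n)\<close>, which regroups
  into the sum over wires. The depth bounds in the definitions of \<open>g\<close> and \<open>f_r\<close> are
  harmless because, in an acyclic circuit, the number of descendants (ancestors) strictly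
  decreases along every edge.\<close>

lemma bottom_up_root_eq_top_down_sum:
  fixes N :: "'n set" and ch :: "'n \<Rightarrow> 'n set" and w :: "'n \<Rightarrow> 'n \<Rightarrow> 'a::comm_ring_1"
    and g t F :: "'n \<Rightarrow> 'a"
  assumes "finite N" and "r \<in> N" and children_in: "\<And>n. n \<in> N \<Longrightarrow> ch n \<subseteq> N"
    and g_rec: "\<And>n. n \<in> N \<Longrightarrow> g n = (\<Sum>c\<in>ch n. w n c * g c) + t n"
    and F_rec: "\<And>m. m \<in> N \<Longrightarrow>
      F m = (if m = r then 1 else 0) + (\<Sum>v\<in>{v\<in>N. m \<in> ch v}. w v m * F v)"
  shows "g r = (\<Sum>n\<in>N. F n * t n)"
proof -
  define edge_sum where "edge_sum = (\<Sum>n\<in>N. \<Sum>c\<in>{c\<in>N. c \<in> ch n}. w n c * F n * g c)"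
  have "F m * g m = (if m = r then g m else 0) + (\<Sum>v\<in>{v\<in>N. m \<in> ch v}. w v m * F v * g m)"
    if "m \<in> N" for m
    by (subst F_rec[OF that]) (simp add: distrib_right sum_distrib_right)
  then have "(\<Sum>m\<in>N. F m * g m) = g r + (\<Sum>m\<in>N. \<Sum>v\<in>{v\<in>N. m \<in> ch v}. w v m * F v * g m)"
    using assms(1,2) by (simp add: sum.distrib)
  also have "(\<Sum>m\<in>N. \<Sum>v\<in>{v\<in>N. m \<in> ch v}. w v m * F v * g m) = edge_sum"
    unfolding edge_sum_def by (rule sum.swap_restrict[symmetric, OF assms(1) assms(1)])
  finally have top_down: "(\<Sum>m\<in>N. F m * g m) = g r + edge_sum" .
  have "ch n = {c\<in>N. c \<in> ch n}" if "n \<in> N" for n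
    using children_in[OF that] by blast
  then have "(\<Sum>m\<in>N. F m * g m) = edge_sum + (\<Sum>n\<in>N. F n * t n)"
    unfolding edge_sum_def
    by (simp add: g_rec distrib_left sum_distrib_left sum.distrib mult_ac cong: sum.cong)
  with top_down show ?thesis by (simp add: add.commute)
qed

lemma card_trancl_Image_less:
  assumes "finite E" and "acyclic E" and "(a, b) \<in> E"
  shows "card (E\<^sup>+ `` {b}) < card (E\<^sup>+ `` {a})"
proof (rule psubset_card_mono)
  show "finite (E\<^sup>+ `` {a})"
    using assms(1) by (simp add: finite_trancl finite_Image)
  have "E\<^sup>+ `` {b} \<subseteq> E\<^sup>+ `` {a}"
    using assms(3) by (auto intro: trancl_into_trancl2)
  moreover have "b \<in> E\<^sup>+ `` {a}" "b \<notin> E\<^sup>+ `` {b}"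
    using assms(2,3) by (auto simp: acyclic_def)
  ultimately show "E\<^sup>+ `` {b} \<subset> E\<^sup>+ `` {a}"
    by blast
qed

lemma card_trancl_Image_less_card:
  assumes "finite N" and "E \<subseteq> N \<times> N" and "acyclic E" and "a \<in> N"
  shows "card (E\<^sup>+ `` {a}) < card N"
proof -
  have "E\<^sup>+ `` {a} \<subseteq> N - {a}"
    using trancl_subset_Sigma[OF assms(2)] assms(3) by (auto simp: acyclic_def)
  then show ?thesis
    using assms(1,4) by (meson card_mono card_Diff1_less finite_Diff le_less_trans)
qed

lemma logistic_circuit_edges_subset:
  assumes "logistic_circuit k N G r"
  shows "edges N G \<subseteq> N \<times> N"
  using assms unfolding logistic_circuit_def edges_def by auto

lemma logistic_circuit_finite_edges:
  assumes "logistic_circuit k N G r"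
  shows "finite (edges N G)"
  using assms logistic_circuit_edges_subset[OF assms] finite_subset
  unfolding logistic_circuit_def by blast

lemma logistic_circuit_acyclic:
  assumes "logistic_circuit k N G r"
  shows "acyclic (edges N G)"
  using assms by (simp add: logistic_circuit_def)

lemma logistic_circuit_descendants_card_less:
  assumes "logistic_circuit k N G r" and "(n, c) \<in> edges N G"
  shows "card ((edges N G)\<^sup>+ `` {c}) < card ((edges N G)\<^sup>+ `` {n})"
  using logistic_circuit_finite_edges[OF assms(1)] logistic_circuit_acyclic[OF assms(1)] assms(2)
  by (rule card_trancl_Image_less)

lemma logistic_circuit_ancestors_card_less:
  assumes "logistic_circuit k N G r" and "(v, n) \<in> edges N G"
  shows "card (((edges N G)\<inverse>)\<^sup>+ `` {v}) < card (((edges N G)\<inverse>)\<^sup>+ `` {n})"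
  using logistic_circuit_finite_edges[OF assms(1)] logistic_circuit_acyclic[OF assms(1)] assms(2)
  by (intro card_trancl_Image_less) simp_all

lemma logistic_circuit_descendants_card_less_card:
  assumes "logistic_circuit k N G r" and "n \<in> N"
  shows "card ((edges N G)\<^sup>+ `` {n}) < card N"
proof (rule card_trancl_Image_less_card)
  show "finite N"
    using assms(1) by (simp add: logistic_circuit_def)
qed (simp_all add: logistic_circuit_edges_subset[OF assms(1)] logistic_circuit_acyclic[OF assms(1)] assms(2))

lemma logistic_circuit_ancestors_card_less_card:
  assumes "logistic_circuit k N G r" and "n \<in> N"
  shows "card (((edges N G)\<inverse>)\<^sup>+ `` {n}) < card N"
proof (rule card_trancl_Image_less_card)
  show "finite N"
    using assms(1) by (simp add: logistic_circuit_def)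
  show "(edges N G)\<inverse> \<subseteq> N \<times> N"
    using logistic_circuit_edges_subset[OF assms(1)] by blast
qed (simp_all add: logistic_circuit_acyclic[OF assms(1)] assms(2))

lemma g_aux_depth_independent:
  assumes LC: "logistic_circuit k N G r"
  shows "n \<in> N \<Longrightarrow> card ((edges N G)\<^sup>+ `` {n}) < d \<Longrightarrow> card ((edges N G)\<^sup>+ `` {n}) < d'
    \<Longrightarrow> g_aux k G x d n = g_aux k G x d' n"
proof (induction d arbitrary: n d')
  case 0
  then show ?case by simp
next
  case (Suc d)
  then obtain d'' where d': "d' = Suc d''"
    by (cases d') auto
  have "g_aux k G x d c = g_aux k G x d'' c" if "c \<in> children (G n)" for c
  proof (rule Suc.IH)
    have edge: "(n, c) \<in> edges N G"
      using Suc.prems(1) that by (simp add: edges_def)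
    then show "c \<in> N"
      using logistic_circuit_edges_subset[OF LC] by auto
    show "card ((edges N G)\<^sup>+ `` {c}) < d" "card ((edges N G)\<^sup>+ `` {c}) < d''"
      using logistic_circuit_descendants_card_less[OF LC edge] Suc.prems d' by linarith+
  qed
  then show ?case
    using d' by (cases "G n") (force intro!: arg_cong[where f = sum_list] map_cong)+
qed

lemma gflow_aux_depth_independent:
  assumes LC: "logistic_circuit k N G r"
  shows "card (((edges N G)\<inverse>)\<^sup>+ `` {n}) < d \<Longrightarrow> card (((edges N G)\<inverse>)\<^sup>+ `` {n}) < d'
    \<Longrightarrow> gflow_aux k N G r d n x c = gflow_aux k N G r d' n x c"
proof (induction d arbitrary: n c d')
  case 0
  then show ?case by simp
next
  case (Suc d)
  then obtain d'' where d': "d' = Suc d''"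
    by (cases d') auto
  have "gflow_aux k N G r d v x n = gflow_aux k N G r d'' v x n" if "v \<in> parents N G n" for v
  proof (rule Suc.IH)
    have "(v, n) \<in> edges N G"
      using that by (simp add: edges_def parents_def)
    then show "card (((edges N G)\<inverse>)\<^sup>+ `` {v}) < d" "card (((edges N G)\<inverse>)\<^sup>+ `` {v}) < d''"
      using logistic_circuit_ancestors_card_less[OF LC] Suc.prems d' by fastforce+
  qed
  then show ?case
    using d' by (cases "G n") (simp_all cong: sum.cong)
qed

lemma g_unfold:
  assumes LC: "logistic_circuit k N G r" and n: "n \<in> N"
  shows "g k N G x n =
    (case G n of
       Lit i b \<Rightarrow> 0
     | AndG cs \<Rightarrow> (\<Sum>c\<leftarrow>cs. g k N G x c)
     | OrG ws \<Rightarrow> (\<Sum>(c, \<theta>)\<leftarrow>ws. flow k G n x c * (g k N G x c + \<theta>)))"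
proof -
  obtain d where d: "card N = Suc d"
    using logistic_circuit_descendants_card_less_card[OF LC n] by (cases "card N") auto
  have "g_aux k G x d c = g k N G x c" if "c \<in> children (G n)" for c
    unfolding g_def
  proof (rule g_aux_depth_independent[OF LC])
    have edge: "(n, c) \<in> edges N G"
      using n that by (simp add: edges_def)
    then show "c \<in> N"
      using logistic_circuit_edges_subset[OF LC] by auto
    show "card ((edges N G)\<^sup>+ `` {c}) < d" "card ((edges N G)\<^sup>+ `` {c}) < card N"
      using logistic_circuit_descendants_card_less[OF LC edge]
        logistic_circuit_descendants_card_less_card[OF LC n] d by linarith+
  qed
  moreover have "g k N G x n = g_aux k G x (Suc d) n"
    unfolding g_def d ..
  ultimately show ?thesis
    by (cases "G n") (force intro!: arg_cong[where f = sum_list] map_cong)+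
qed

lemma gflow_unfold:
  assumes LC: "logistic_circuit k N G r" and n: "n \<in> N"
  shows "gflow k N G r n x c =
    (if n = r then flow k G r x c
     else (case G n of
             Lit i b \<Rightarrow> 0
           | AndG cs \<Rightarrow> (\<Sum>v\<in>parents N G n. gflow k N G r v x n)
           | OrG ws \<Rightarrow> flow k G n x c * (\<Sum>v\<in>parents N G n. gflow k N G r v x n)))"
proof -
  obtain d where d: "card N = Suc d"
    using logistic_circuit_ancestors_card_less_card[OF LC n] by (cases "card N") auto
  have "gflow_aux k N G r d v x n = gflow k N G r v x n" if "v \<in> parents N G n" for v
    unfolding gflow_def
  proof (rule gflow_aux_depth_independent[OF LC])
    have "(v, n) \<in> edges N G"
      using that by (simp add: edges_def parents_def)
    then show "card (((edges N G)\<inverse>)\<^sup>+ `` {v}) < d"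
      "card (((edges N G)\<inverse>)\<^sup>+ `` {v}) < card N"
      using logistic_circuit_ancestors_card_less[OF LC]
        logistic_circuit_ancestors_card_less_card[OF LC n] d by fastforce+
  qed
  moreover have "gflow k N G r n x c = gflow_aux k N G r (Suc d) n x c"
    unfolding gflow_def d ..
  ultimately show ?thesis
    by (cases "G n") (simp_all cong: sum.cong)
qed

definition edge_weight :: "nat \<Rightarrow> ('n \<Rightarrow> 'n gate) \<Rightarrow> (nat \<Rightarrow> real) \<Rightarrow> 'n \<Rightarrow> 'n \<Rightarrow> real" where
  "edge_weight k G x n c = (case G n of OrG ws \<Rightarrow> flow k G n x c | _ \<Rightarrow> 1)"

definition or_inputs :: "('n \<Rightarrow> 'n gate) \<Rightarrow> 'n \<Rightarrow> ('n \<times> real) list" where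
  "or_inputs G n = (case G n of OrG ws \<Rightarrow> ws | _ \<Rightarrow> [])"

definition wire_bias :: "nat \<Rightarrow> ('n \<Rightarrow> 'n gate) \<Rightarrow> (nat \<Rightarrow> real) \<Rightarrow> 'n \<Rightarrow> real" where
  "wire_bias k G x n = (\<Sum>(c, \<theta>)\<in>set (or_inputs G n). flow k G n x c * \<theta>)"

definition node_flow :: "nat \<Rightarrow> 'n set \<Rightarrow> ('n \<Rightarrow> 'n gate) \<Rightarrow> 'n \<Rightarrow> (nat \<Rightarrow> real) \<Rightarrow> 'n \<Rightarrow> real" where
  "node_flow k N G r x m = (if m = r then 1 else \<Sum>v\<in>parents N G m. gflow k N G r v x m)"

lemma g_eq_sum_edge_weight:
  assumes LC: "logistic_circuit k N G r" and n: "n \<in> N"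
  shows "g k N G x n = (\<Sum>c\<in>children (G n). edge_weight k G x n c * g k N G x c) + wire_bias k G x n"
proof (cases "G n")
  case (Lit i b)
  then show ?thesis
    using g_unfold[OF LC n] by (simp add: wire_bias_def or_inputs_def)
next
  case (AndG cs)
  then have "distinct cs"
    using LC n by (auto simp: logistic_circuit_def)
  then show ?thesis
    using g_unfold[OF LC n] AndG
    by (simp add: sum_list_distinct_conv_sum_set edge_weight_def wire_bias_def or_inputs_def)
next
  case (OrG ws)
  then have "distinct ws" and inj: "inj_on fst (set ws)"
    using LC n by (auto simp: logistic_circuit_def distinct_map)
  have "g k N G x n = (\<Sum>(c, \<theta>)\<in>set ws. flow k G n x c * (g k N G x c + \<theta>))"
    using g_unfold[OF LC n] OrG \<open>distinct ws\<close> by (simp add: sum_list_distinct_conv_sum_set)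
  also have "\<dots> = (\<Sum>p\<in>set ws. flow k G n x (fst p) * g k N G x (fst p)) + wire_bias k G x n"
    by (simp add: wire_bias_def or_inputs_def OrG sum.distrib distrib_left case_prod_beta')
  also have "(\<Sum>p\<in>set ws. flow k G n x (fst p) * g k N G x (fst p))
      = (\<Sum>c\<in>children (G n). edge_weight k G x n c * g k N G x c)"
    using sum.reindex[OF inj, of "\<lambda>c. flow k G n x c * g k N G x c"] OrG
    by (simp add: edge_weight_def)
  finally show ?thesis .
qed

lemma gflow_eq_edge_weight_node_flow:
  assumes LC: "logistic_circuit k N G r" and n: "n \<in> N" and c: "c \<in> children (G n)"
  shows "gflow k N G r n x c = edge_weight k G x n c * node_flow k N G r x n"
proof -
  obtain ws where "G r = OrG ws"
    using LC by (auto simp: logistic_circuit_def)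
  then show ?thesis
    using gflow_unfold[OF LC n, where c = c] c
    by (cases "G n") (auto simp: edge_weight_def node_flow_def)
qed

lemma logistic_circuit_parents_root:
  assumes "logistic_circuit k N G r"
  shows "parents N G r = {}"
proof (rule ccontr)
  assume "parents N G r \<noteq> {}"
  then obtain v where "v \<in> parents N G r" by auto
  then have "(v, r) \<in> edges N G" and "(r, v) \<in> (edges N G)\<^sup>*"
    using assms by (auto simp: edges_def parents_def logistic_circuit_def)
  then have "(r, r) \<in> (edges N G)\<^sup>+"
    by (simp add: rtrancl_into_trancl1)
  then show False
    using assms by (simp add: logistic_circuit_def acyclic_def)
qed

lemma node_flow_recursion:
  assumes LC: "logistic_circuit k N G r"
  shows "node_flow k N G r x m
    = (if m = r then 1 else 0) + (\<Sum>v\<in>parents N G m. edge_weight k G x v m * node_flow k N G r x v)"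
proof (cases "m = r")
  case True
  then show ?thesis
    using logistic_circuit_parents_root[OF LC] by (simp add: node_flow_def)
next
  case False
  have "gflow k N G r v x m = edge_weight k G x v m * node_flow k N G r x v"
    if "v \<in> parents N G m" for v
    using that by (intro gflow_eq_edge_weight_node_flow[OF LC]) (auto simp: parents_def)
  then show ?thesis
    using False by (simp add: node_flow_def cong: sum.cong)
qed

lemma sum_wires_eq_sum_node_flow:
  assumes LC: "logistic_circuit k N G r"
  shows "(\<Sum>(n, \<theta>, c)\<in>wires N G. gflow k N G r n x c * \<theta>)
    = (\<Sum>n\<in>N. node_flow k N G r x n * wire_bias k G x n)"
proof -
  have finite: "finite N"
    using LC by (simp add: logistic_circuit_def)
  have wires: "wires N G = (\<lambda>(n, c, \<theta>). (n, \<theta>, c)) ` (SIGMA n:N. set (or_inputs G n))"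
    by (auto simp: wires_def or_inputs_def image_iff split: gate.splits) (metis)
  have "node_flow k N G r x n * wire_bias k G x n
      = (\<Sum>(c, \<theta>)\<in>set (or_inputs G n). gflow k N G r n x c * \<theta>)" if "n \<in> N" for n
  proof (cases "G n")
    case (OrG ws)
    then have "gflow k N G r n x c = node_flow k N G r x n * flow k G n x c"
      if "(c, \<theta>) \<in> set ws" for c \<theta>
      using gflow_eq_edge_weight_node_flow[OF LC \<open>n \<in> N\<close>, of c] that
      by (force simp: edge_weight_def)
    then show ?thesis
      using OrG
      by (auto simp: wire_bias_def or_inputs_def sum_distrib_left mult.assoc intro!: sum.cong)
  qed (simp_all add: wire_bias_def or_inputs_def)
  then have "(\<Sum>n\<in>N. node_flow k N G r x n * wire_bias k G x n)
      = (\<Sum>n\<in>N. \<Sum>(c, \<theta>)\<in>set (or_inputs G n). gflow k N G r n x c * \<theta>)"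
    by (rule sum.cong[OF refl])
  also have "\<dots> = (\<Sum>(n, c, \<theta>)\<in>(SIGMA n:N. set (or_inputs G n)). gflow k N G r n x c * \<theta>)"
    using finite by (subst sum.Sigma) (auto simp: split_def)
  also have "\<dots> = (\<Sum>(n, \<theta>, c)\<in>wires N G. gflow k N G r n x c * \<theta>)"
    unfolding wires by (subst sum.reindex) (auto simp: inj_on_def split_def)
  finally show ?thesis ..
qed

theorem corollary2:
  fixes k :: nat and N :: "'n set" and G :: "'n \<Rightarrow> 'n gate" and r :: 'n
    and x :: "nat \<Rightarrow> real"
  assumes "logistic_circuit k N G r"
    and "\<forall>i\<in>{1..k}. 0 \<le> x i \<and> x i \<le> 1"
  shows "g k N G x r = (\<Sum>(n, \<theta>, c)\<in>wires N G. gflow k N G r n x c * \<theta>)"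
proof -
  note LC = assms(1)
  have "g k N G x r = (\<Sum>n\<in>N. node_flow k N G r x n * wire_bias k G x n)"
  proof (rule bottom_up_root_eq_top_down_sum[where ch = "\<lambda>n. children (G n)"
        and w = "edge_weight k G x" and g = "g k N G x" and t = "wire_bias k G x"
        and F = "node_flow k N G r x"])
    show "finite N" "r \<in> N" "\<And>n. n \<in> N \<Longrightarrow> children (G n) \<subseteq> N"
      using LC by (simp_all add: logistic_circuit_def)
    show "\<And>n. n \<in> N \<Longrightarrow> g k N G x n
        = (\<Sum>c\<in>children (G n). edge_weight k G x n c * g k N G x c) + wire_bias k G x n"
      by (rule g_eq_sum_edge_weight[OF LC])
    show "node_flow k N G r x m = (if m = r then 1 else 0)
        + (\<Sum>v\<in>{v \<in> N. m \<in> children (G v)}. edge_weight k G x v m * node_flow k N G r x v)"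
      for m
      using node_flow_recursion[OF LC, of x m] by (simp only: parents_def)
  qed
  also have "\<dots> = (\<Sum>(n, \<theta>, c)\<in>wires N G. gflow k N G r n x c * \<theta>)"
    by (rule sum_wires_eq_sum_node_flow[OF LC, symmetric])
  finally show ?thesis .
qed

end
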